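(* Let $k\in\mathbb{N}$ and let $G$ be a graph that has a $T_0$-partition of width at most $k$ for some tree $T_0$. Then $G$ has a $T$-partition of width at most $k$ for some tree $T$ with $\Delta(T)\leq \max\{k\Delta(G),2\}$.
   Context: All graphs are finite and simple. $\Delta(G)$ denotes the maximum degree of $G$. For a graph $G$ and a tree $T$, a $T$-partition of $G$ is a family $(V_x : x\in V(T))$ of pairwise disjoint subsets of $V(G)$ (some possibly empty) with union $V(G)$, indexed by the nodes of $T$, such that for every edge $vw$ of $G$, if $v\in V_x$ and $w\in V_y$ then $x=y$ or $xy\in E(T)$. The width of a $T$-partition is $\max\{|V_x| : x\in V(T)\}$. *)

theory Defs
  imports Main
begin

definition graph :: "'a set \<Rightarrow> ('a \<Rightarrow> 'a \<Rightarrow> bool) \<Rightarrow> bool" where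
  "graph V E \<longleftrightarrow> finite V \<and> (\<forall>x y. E x y \<longrightarrow> x \<in> V \<and> y \<in> V)
     \<and> (\<forall>x y. E x y \<longrightarrow> E y x) \<and> (\<forall>x. \<not> E x x)"

definition degree :: "'a set \<Rightarrow> ('a \<Rightarrow> 'a \<Rightarrow> bool) \<Rightarrow> 'a \<Rightarrow> nat" where
  "degree V E v = card {w \<in> V. E v w}"

definition max_degree :: "'a set \<Rightarrow> ('a \<Rightarrow> 'a \<Rightarrow> bool) \<Rightarrow> nat" where
  "max_degree V E = Max (insert 0 (degree V E ` V))"

definition is_cycle :: "('a \<Rightarrow> 'a \<Rightarrow> bool) \<Rightarrow> 'a list \<Rightarrow> bool" where
  "is_cycle E cs \<longleftrightarrow> length cs \<ge> 3 \<and> distinct cs \<and>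
     (\<forall>i < length cs. E (cs ! i) (cs ! ((i + 1) mod length cs)))"

definition connected_graph :: "'a set \<Rightarrow> ('a \<Rightarrow> 'a \<Rightarrow> bool) \<Rightarrow> bool" where
  "connected_graph V E \<longleftrightarrow> (\<forall>x\<in>V. \<forall>y\<in>V. E\<^sup>*\<^sup>* x y)"

definition tree :: "'b set \<Rightarrow> ('b \<Rightarrow> 'b \<Rightarrow> bool) \<Rightarrow> bool" where
  "tree X F \<longleftrightarrow> graph X F \<and> X \<noteq> {} \<and> connected_graph X F \<and> \<not> (\<exists>cs. is_cycle F cs)"

definition T_partition :: "'a set \<Rightarrow> ('a \<Rightarrow> 'a \<Rightarrow> bool) \<Rightarrow> 'b set \<Rightarrow> ('b \<Rightarrow> 'b \<Rightarrow> bool)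
    \<Rightarrow> ('b \<Rightarrow> 'a set) \<Rightarrow> bool" where
  "T_partition V E X F P \<longleftrightarrow>
     (\<forall>x\<in>X. \<forall>y\<in>X. x \<noteq> y \<longrightarrow> P x \<inter> P y = {}) \<and>
     (\<Union>x\<in>X. P x) = V \<and>
     (\<forall>v w x y. E v w \<longrightarrow> x \<in> X \<longrightarrow> y \<in> X \<longrightarrow> v \<in> P x \<longrightarrow> w \<in> P y \<longrightarrow> x = y \<or> F x y)"

definition partition_width :: "'b set \<Rightarrow> ('b \<Rightarrow> 'a set) \<Rightarrow> nat" where
  "partition_width X P = Max (card ` P ` X)"

end

theory Submission
  imports Defs
begin

text \<open>Keep only the edges of the tree that carry an edge of G. These form a forest H of maximum degree
  at most k \<Delta>(G): every such edge at a bag B is witnessed by a distinct G-neighbour of one of the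
  at most k vertices of B. Any forest H extends to a tree F on the same nodes with
  deg_F(x) \<le> max(deg_H(x), 2): delete a leaf l of H, extend H - l inductively to F', and put l back
  as a leaf of its H-neighbour p if p has room, otherwise into an edge of F' at p that is not in H
  (such an edge exists because deg_F'(p) exceeds the H-degree of p without l); an isolated l is
  attached to a leaf of F'. Since F contains H, the bags still form an F-partition.\<close>


lemma is_cycle_iff:
  "is_cycle E cs \<longleftrightarrow> 3 \<le> length cs \<and> distinct cs \<and> successively E cs \<and> E (last cs) (hd cs)"
proof (cases "cs = []")
  case False
  let ?n = "length cs"
  have "(\<forall>i<?n. E (cs ! i) (cs ! ((i + 1) mod ?n))) \<longleftrightarrow>
        (\<forall>i. Suc i < ?n \<longrightarrow> E (cs ! i) (cs ! Suc i)) \<and> E (cs ! (?n - 1)) (cs ! 0)"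
  proof -
    have "i < ?n \<longleftrightarrow> Suc i < ?n \<or> i = ?n - 1" for i
      using False by (cases cs) auto
    moreover have "(?n - 1 + 1) mod ?n = 0" "Suc i < ?n \<Longrightarrow> (i + 1) mod ?n = Suc i" for i
      using False by auto
    ultimately show ?thesis by (metis Suc_eq_plus1)
  qed
  with False show ?thesis
    by (simp add: is_cycle_def successively_conv_nth last_conv_nth hd_conv_nth)
qed (simp add: is_cycle_def)

lemma is_cycle_mono:
  assumes "is_cycle E cs" "\<And>x y. x \<in> set cs \<Longrightarrow> y \<in> set cs \<Longrightarrow> E x y \<Longrightarrow> E' x y"
  shows "is_cycle E' cs"
proof -
  have "cs \<noteq> []" using assms(1) by (auto simp: is_cycle_iff)
  then show ?thesis
    using assms by (auto simp: is_cycle_iff intro: successively_mono)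
qed

lemma is_cycle_append_commute:
  assumes "is_cycle E (xs @ ys)" shows "is_cycle E (ys @ xs)"
  using assms by (cases "xs = []"; cases "ys = []") (auto simp: is_cycle_iff successively_append_iff)

lemma is_cycle_through:
  assumes "is_cycle E cs" "l \<in> set cs"
  obtains ys where "2 \<le> length ys" "distinct ys" "l \<notin> set ys" "hd ys \<noteq> last ys"
    "successively E ys" "E (last ys) l" "E l (hd ys)"
proof -
  obtain as bs where "cs = (as @ [l]) @ bs" using split_list[OF assms(2)] by auto
  then obtain ys where c: "is_cycle E (ys @ [l])"
    using assms(1) is_cycle_append_commute by (metis append_assoc)
  then have "2 \<le> length ys" "distinct ys" by (auto simp: is_cycle_iff)
  moreover from this have "hd ys \<noteq> last ys"
    by (cases ys) auto
  moreover have "ys \<noteq> []" using calculation(1) by auto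
  ultimately show thesis
    using c that by (auto simp: is_cycle_iff successively_append_iff)
qed

text \<open>A longest path ends in a vertex of degree at most one: a further neighbour of its endpoint
  would either extend the path or close a cycle with it.\<close>

lemma acyclic_graph_has_leaf:
  assumes g: "graph X H" and acyclic: "\<nexists>cs. is_cycle H cs" and "X \<noteq> {}"
  shows "\<exists>v\<in>X. degree X H v \<le> 1"
proof -
  have fin: "finite X" and irrefl: "\<And>x. \<not> H x x" using g by (auto simp: graph_def)
  define path where "path xs \<longleftrightarrow> xs \<noteq> [] \<and> distinct xs \<and> set xs \<subseteq> X \<and> successively H xs" for xs
  obtain a where "a \<in> X" using \<open>X \<noteq> {}\<close> by blast
  then have "path [a]" by (simp add: path_def)
  moreover have "length xs < Suc (card X)" if "path xs" for xs
    using that fin card_mono[of X "set xs"] by (simp add: path_def distinct_card less_Suc_eq_le)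
  ultimately obtain xs where xs: "path xs" and longest: "\<And>ys. path ys \<Longrightarrow> length ys \<le> length xs"
    using ex_has_greatest_nat[of path "[a]" length] by metis
  define v where "v = last xs"
  have "v \<in> X" using xs by (auto simp: path_def v_def)
  have "{w \<in> X. H v w} \<subseteq> {last (butlast xs)}"
  proof
    fix w assume w: "w \<in> {w \<in> X. H v w}"
    have "w \<in> set xs"
    proof (rule ccontr)
      assume "w \<notin> set xs"
      with xs w have "path (xs @ [w])" by (auto simp: path_def successively_append_iff v_def)
      with longest show False by fastforce
    qed
    then obtain as bs where split: "xs = as @ w # bs" by (meson split_list)
    have "bs \<noteq> []" using w irrefl split by (auto simp: v_def)
    moreover have "\<not> is_cycle H (w # bs)" using acyclic by blast
    ultimately have "length bs = 1"
      using w xs split by (auto simp: is_cycle_iff path_def v_def successively_append_iff not_le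
        dest: less_2_cases)
    then show "w \<in> {last (butlast xs)}"
      using split by (auto simp: length_Suc_conv butlast_append)
  qed
  then have "degree X H v \<le> 1" unfolding degree_def
    using card_mono[of "{last (butlast xs)}"] by fastforce
  with \<open>v \<in> X\<close> show ?thesis by blast
qed

definition add_leaf :: "('a \<Rightarrow> 'a \<Rightarrow> bool) \<Rightarrow> 'a \<Rightarrow> 'a \<Rightarrow> 'a \<Rightarrow> 'a \<Rightarrow> bool" where
  "add_leaf F u l = (\<lambda>x y. F x y \<or> {x, y} = {u, l})"

definition subdivide :: "('a \<Rightarrow> 'a \<Rightarrow> bool) \<Rightarrow> 'a \<Rightarrow> 'a \<Rightarrow> 'a \<Rightarrow> 'a \<Rightarrow> 'a \<Rightarrow> bool" where
  "subdivide F p q l = (\<lambda>x y. F x y \<and> {x, y} \<noteq> {p, q} \<or> {x, y} = {p, l} \<or> {x, y} = {q, l})"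

lemma connected_graph_insert:
  assumes "connected_graph X F" "u \<in> X" "F' u l" "F' l u" "\<And>x y. F x y \<Longrightarrow> F'\<^sup>*\<^sup>* x y"
  shows "connected_graph (insert l X) F'"
proof -
  have "F'\<^sup>*\<^sup>* x y" if "x \<in> X" "y \<in> X" for x y
    using assms(1) that unfolding connected_graph_def
    by (metis assms(5) mono_rtranclp rtranclp_idemp)
  then have "F'\<^sup>*\<^sup>* x u" "F'\<^sup>*\<^sup>* u x" if "x \<in> insert l X" for x
    using that assms(2-4) by auto
  then show ?thesis
    unfolding connected_graph_def by (meson rtranclp_trans)
qed

lemma tree_add_leaf:
  assumes "tree X F" "u \<in> X" "l \<notin> X"
  shows "tree (insert l X) (add_leaf F u l)"
proof -
  have g: "graph X F" and acyclic: "\<nexists>cs. is_cycle F cs"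
    using assms(1) by (auto simp: tree_def)
  have FX: "\<And>x y. F x y \<Longrightarrow> x \<in> X \<and> y \<in> X" using g by (auto simp: graph_def)
  have "graph (insert l X) (add_leaf F u l)"
    using g assms(2,3) unfolding graph_def add_leaf_def by (auto simp: doubleton_eq_iff)
  moreover have "connected_graph (insert l X) (add_leaf F u l)"
    using assms by (intro connected_graph_insert[where F = F])
      (auto simp: tree_def add_leaf_def)
  moreover have "\<not> is_cycle (add_leaf F u l) cs" for cs
  proof
    assume cycle: "is_cycle (add_leaf F u l) cs"
    show False
    proof (cases "l \<in> set cs")
      case True
      \<comment> \<open>both cycle neighbours of l would have to be u\<close>
      with cycle obtain ys where "hd ys \<noteq> last ys" "l \<notin> set ys"
        "add_leaf F u l (last ys) l" "add_leaf F u l l (hd ys)"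
        by (rule is_cycle_through)
      then show False using FX assms(3) by (auto simp: add_leaf_def doubleton_eq_iff)
    next
      case False
      have "is_cycle F cs"
        using cycle by (rule is_cycle_mono) (use False in \<open>auto simp: add_leaf_def doubleton_eq_iff\<close>)
      with acyclic show False by blast
    qed
  qed
  ultimately show ?thesis using assms(1) by (auto simp: tree_def)
qed

lemma tree_subdivide:
  assumes "tree X F" "F p q" "l \<notin> X"
  shows "tree (insert l X) (subdivide F p q l)"
proof -
  have g: "graph X F" and acyclic: "\<nexists>cs. is_cycle F cs"
    using assms(1) by (auto simp: tree_def)
  have FX: "\<And>x y. F x y \<Longrightarrow> x \<in> X \<and> y \<in> X" and sym: "\<And>x y. F x y \<Longrightarrow> F y x"
    and irrefl: "\<And>x. \<not> F x x" using g by (auto simp: graph_def)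
  have pq: "p \<in> X" "q \<in> X" "p \<noteq> q" using FX irrefl assms(2) by auto
  let ?S = "subdivide F p q l"
  have "graph (insert l X) ?S"
    using g pq assms(3) unfolding graph_def subdivide_def by (auto simp: doubleton_eq_iff)
  moreover have "?S\<^sup>*\<^sup>* x y" if "F x y" for x y
  proof (cases "{x, y} = {p, q}")
    case True
    then have "?S x l" "?S l y" using pq by (auto simp: subdivide_def doubleton_eq_iff)
    then show ?thesis by (meson r_into_rtranclp rtranclp_trans)
  qed (use that in \<open>auto simp: subdivide_def\<close>)
  then have "connected_graph (insert l X) ?S"
    using assms pq by (intro connected_graph_insert[where F = F]) (auto simp: tree_def subdivide_def)
  moreover have "\<not> is_cycle ?S cs" for cs
  proof
    assume cycle: "is_cycle ?S cs"
    show False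
    proof (cases "l \<in> set cs")
      case True
      with cycle obtain ys where ys: "2 \<le> length ys" "distinct ys" "l \<notin> set ys" "hd ys \<noteq> last ys"
        "successively ?S ys" "?S (last ys) l" "?S l (hd ys)"
        by (rule is_cycle_through)
      \<comment> \<open>the cycle enters and leaves l through p and q, so closing ys with the edge pq gives a cycle of F\<close>
      then have ends: "{hd ys, last ys} = {p, q}"
        using FX assms(3) by (auto simp: subdivide_def doubleton_eq_iff)
      have "successively F ys"
        using ys(5) by (rule successively_mono) (use ys(3) in \<open>auto simp: subdivide_def doubleton_eq_iff\<close>)
      moreover have "F (last ys) (hd ys)" using ends assms(2) sym by (auto simp: doubleton_eq_iff)
      moreover have "length ys \<noteq> 2"
      proof
        assume "length ys = 2"
        then obtain a b where "ys = [a, b]" by (auto simp: numeral_2_eq_2 length_Suc_conv)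
        with ys(3,5) ends show False by (auto simp: subdivide_def doubleton_eq_iff)
      qed
      ultimately have "is_cycle F ys" using ys(1,2) by (simp add: is_cycle_iff)
      with acyclic show False by blast
    next
      case False
      have "is_cycle F cs"
        using cycle by (rule is_cycle_mono) (use False in \<open>auto simp: subdivide_def doubleton_eq_iff\<close>)
      with acyclic show False by blast
    qed
  qed
  ultimately show ?thesis using assms(1) by (auto simp: tree_def)
qed

lemma degree_add_leaf:
  assumes "graph X F" "u \<in> X" "l \<notin> X"
  shows "degree (insert l X) (add_leaf F u l) l = 1"
    and "degree (insert l X) (add_leaf F u l) u = Suc (degree X F u)"
    and "x \<in> X \<Longrightarrow> x \<noteq> u \<Longrightarrow> degree (insert l X) (add_leaf F u l) x = degree X F x"
proof -
  have fin: "finite X" and FX: "\<And>x y. F x y \<Longrightarrow> x \<in> X \<and> y \<in> X"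
    using assms(1) by (auto simp: graph_def)
  have "{w \<in> insert l X. add_leaf F u l l w} = {u}"
    using FX assms(2,3) by (auto simp: add_leaf_def doubleton_eq_iff)
  then show "degree (insert l X) (add_leaf F u l) l = 1" by (simp add: degree_def)
  have "{w \<in> insert l X. add_leaf F u l u w} = insert l {w \<in> X. F u w}"
    using FX assms(2,3) by (auto simp: add_leaf_def doubleton_eq_iff)
  then show "degree (insert l X) (add_leaf F u l) u = Suc (degree X F u)"
    using fin assms(3) by (simp add: degree_def)
  assume "x \<in> X" "x \<noteq> u"
  then have "{w \<in> insert l X. add_leaf F u l x w} = {w \<in> X. F x w}"
    using FX assms(3) by (auto simp: add_leaf_def doubleton_eq_iff)
  then show "degree (insert l X) (add_leaf F u l) x = degree X F x" by (simp add: degree_def)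
qed

lemma degree_subdivide:
  assumes "graph X F" "F p q" "l \<notin> X"
  shows "degree (insert l X) (subdivide F p q l) l = 2"
    and "x \<in> X \<Longrightarrow> degree (insert l X) (subdivide F p q l) x = degree X F x"
proof -
  have fin: "finite X" and FX: "\<And>x y. F x y \<Longrightarrow> x \<in> X \<and> y \<in> X"
    and sym: "\<And>x y. F x y \<Longrightarrow> F y x" and irrefl: "\<And>x. \<not> F x x"
    using assms(1) by (auto simp: graph_def)
  have pq: "p \<in> X" "q \<in> X" "p \<noteq> q" using FX irrefl assms(2) by auto
  have "{w \<in> insert l X. subdivide F p q l l w} = {p, q}"
    using FX assms(3) pq by (auto simp: subdivide_def doubleton_eq_iff)
  then show "degree (insert l X) (subdivide F p q l) l = 2" using pq by (simp add: degree_def)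
  assume x: "x \<in> X"
  show "degree (insert l X) (subdivide F p q l) x = degree X F x"
  proof (cases "x \<in> {p, q}")
    case True
    \<comment> \<open>x trades its neighbour y on the edge pq for l\<close>
    then obtain y where y: "{x, y} = {p, q}" by auto
    then have "y \<in> {w \<in> X. F x w}" using assms(2) sym pq by (auto simp: doubleton_eq_iff)
    moreover have "{w \<in> insert l X. subdivide F p q l x w} = insert l ({w \<in> X. F x w} - {y})"
      using FX assms(3) pq y by (auto simp: subdivide_def doubleton_eq_iff)
    ultimately show ?thesis
      using fin assms(3) by (simp add: degree_def card_insert_if card_Suc_Diff1 del: card_Diff_insert)
  next
    case False
    then have "{w \<in> insert l X. subdivide F p q l x w} = {w \<in> X. F x w}"
      using FX assms(3) x by (auto simp: subdivide_def doubleton_eq_iff)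
    then show ?thesis by (simp add: degree_def)
  qed
qed

lemma degree_delete_vertex:
  assumes "graph X H" "x \<in> X - {l}"
  shows "degree X H x = degree (X - {l}) (\<lambda>a b. H a b \<and> a \<noteq> l \<and> b \<noteq> l) x + (if H x l then 1 else 0)"
proof -
  have fin: "finite X" and HX: "\<And>x y. H x y \<Longrightarrow> x \<in> X \<and> y \<in> X"
    using assms(1) by (auto simp: graph_def)
  have "{w \<in> X. H x w} = {w \<in> X - {l}. H x w \<and> x \<noteq> l \<and> w \<noteq> l} \<union> (if H x l then {l} else {})"
    using assms(2) HX by auto
  then show ?thesis using fin by (simp add: degree_def)
qed

definition tree_extension :: "'a set \<Rightarrow> ('a \<Rightarrow> 'a \<Rightarrow> bool) \<Rightarrow> ('a \<Rightarrow> 'a \<Rightarrow> bool) \<Rightarrow> bool" where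
  "tree_extension X H F \<longleftrightarrow>
     tree X F \<and> (\<forall>x y. H x y \<longrightarrow> F x y) \<and> (\<forall>x\<in>X. degree X F x \<le> max (degree X H x) 2)"

context
  fixes X :: "'a set" and H F' :: "'a \<Rightarrow> 'a \<Rightarrow> bool" and l :: 'a
  assumes graph: "graph X H" and "l \<in> X"
    and extension: "tree_extension (X - {l}) (\<lambda>x y. H x y \<and> x \<noteq> l \<and> y \<noteq> l) F'"
begin

private abbreviation "X' \<equiv> X - {l}"
private abbreviation "H' \<equiv> \<lambda>x y. H x y \<and> x \<noteq> l \<and> y \<noteq> l"

private lemma insert_X': "insert l X' = X"
  using \<open>l \<in> X\<close> by auto

private lemma tree_F': "tree X' F'"
  using extension by (simp add: tree_extension_def)

private lemma graph_F': "graph X' F'"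
  using tree_F' by (simp add: tree_def)

private lemma degree_F'_bounded:
  assumes "x \<in> X'" shows "degree X' F' x \<le> max (degree X H x) 2"
proof -
  have "degree X' F' x \<le> max (degree X' H' x) 2"
    using extension assms by (simp add: tree_extension_def)
  then show ?thesis using degree_delete_vertex[OF graph assms] by linarith
qed

lemma tree_extension_add_leaf:
  assumes "u \<in> X'" "degree X' F' u < max (degree X H u) 2" "\<And>y. H l y \<Longrightarrow> y = u"
  shows "tree_extension X H (add_leaf F' u l)"
proof -
  have sym: "\<And>x y. H x y \<Longrightarrow> H y x" using graph by (auto simp: graph_def)
  have "tree X (add_leaf F' u l)"
    using tree_add_leaf[OF tree_F' assms(1), of l, unfolded insert_X'] by simp
  moreover have "add_leaf F' u l x y" if "H x y" for x y
    using that extension assms(3)[of x] assms(3)[of y] sym[OF that]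
    by (cases "x = l \<or> y = l") (auto simp: add_leaf_def tree_extension_def)
  moreover have "degree X (add_leaf F' u l) x \<le> max (degree X H x) 2" if "x \<in> X" for x
    using degree_add_leaf[OF graph_F' assms(1), of l, unfolded insert_X'] degree_F'_bounded[of x]
      assms(2) that
    by (cases "x = l"; cases "x = u") auto
  ultimately show ?thesis by (simp add: tree_extension_def)
qed

lemma tree_extension_subdivide:
  assumes "F' p q" "\<not> H p q" "\<And>y. H l y \<Longrightarrow> y = p"
  shows "tree_extension X H (subdivide F' p q l)"
proof -
  have sym: "\<And>x y. H x y \<Longrightarrow> H y x" using graph by (auto simp: graph_def)
  have "tree X (subdivide F' p q l)"
    using tree_subdivide[OF tree_F' assms(1), of l, unfolded insert_X'] by simp
  moreover have "subdivide F' p q l x y" if "H x y" for x y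
    using that extension assms(2) assms(3)[of x] assms(3)[of y] sym[OF that] sym
    by (cases "x = l \<or> y = l") (auto simp: subdivide_def tree_extension_def doubleton_eq_iff)
  moreover have "degree X (subdivide F' p q l) x \<le> max (degree X H x) 2" if "x \<in> X" for x
    using degree_subdivide[OF graph_F' assms(1), of l, unfolded insert_X'] degree_F'_bounded[of x] that
    by (cases "x = l") auto
  ultimately show ?thesis by (simp add: tree_extension_def)
qed

lemma tree_extension_reinsert_leaf:
  assumes "degree X H l \<le> 1"
  shows "\<exists>F. tree_extension X H F"
proof (cases "\<exists>p. H l p")
  case True
  have fin: "finite X" and HX: "\<And>x y. H x y \<Longrightarrow> x \<in> X \<and> y \<in> X"
    and sym: "\<And>x y. H x y \<Longrightarrow> H y x" and irrefl: "\<And>x. \<not> H x x"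
    using graph by (auto simp: graph_def)
  from True obtain p where p: "H l p" ..
  have "\<forall>a\<in>{w \<in> X. H l w}. \<forall>b\<in>{w \<in> X. H l w}. a = b"
    using assms fin card_le_Suc0_iff_eq[of "{w \<in> X. H l w}"] by (simp add: degree_def)
  then have unique: "y = p" if "H l y" for y
    using HX p that by blast
  have "p \<in> X'" using p HX irrefl by auto
  show ?thesis
  proof (cases "degree X' F' p < max (degree X H p) 2")
    case True
    show ?thesis using tree_extension_add_leaf[OF \<open>p \<in> X'\<close> True unique] by blast
  next
    case False
    \<comment> \<open>then F' has an edge at p outside H, into which l is inserted\<close>
    with degree_delete_vertex[OF graph \<open>p \<in> X'\<close>] sym[OF p]
    have "degree X' H' p < degree X' F' p" by simp
    have "\<not> {w \<in> X'. F' p w} \<subseteq> {w \<in> X'. H' p w}"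
    proof
      assume "{w \<in> X'. F' p w} \<subseteq> {w \<in> X'. H' p w}"
      then have "degree X' F' p \<le> degree X' H' p"
        unfolding degree_def by (rule card_mono[rotated]) (use fin in simp)
      with \<open>degree X' H' p < degree X' F' p\<close> show False by simp
    qed
    then obtain q where "F' p q" "\<not> H p q" using \<open>p \<in> X'\<close> by blast
    show ?thesis using tree_extension_subdivide[OF \<open>F' p q\<close> \<open>\<not> H p q\<close> unique] by blast
  qed
next
  case False
  have "X' \<noteq> {}" "\<nexists>cs. is_cycle F' cs" using tree_F' by (auto simp: tree_def)
  then obtain e where "e \<in> X'" "degree X' F' e \<le> 1"
    using acyclic_graph_has_leaf[OF graph_F'] by blast
  moreover have "\<And>y. H l y \<Longrightarrow> y = e" using False by blast
  ultimately show ?thesis using tree_extension_add_leaf[of e] by fastforce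
qed

end

lemma forest_tree_extension:
  assumes "graph X H" "\<nexists>cs. is_cycle H cs" "X \<noteq> {}"
  shows "\<exists>F. tree_extension X H F"
proof -
  have "finite X" using assms(1) by (simp add: graph_def)
  then show ?thesis using assms
  proof (induction X arbitrary: H rule: finite_psubset_induct)
    case (psubset X)
    have HX: "\<And>x y. H x y \<Longrightarrow> x \<in> X \<and> y \<in> X" and irrefl: "\<And>x. \<not> H x x"
      using psubset.prems(1) by (auto simp: graph_def)
    obtain l where l: "l \<in> X" "degree X H l \<le> 1"
      using acyclic_graph_has_leaf psubset.prems by blast
    show ?case
    proof (cases "X = {l}")
      case True
      have "tree X (\<lambda>_ _. False)"
        using True by (auto simp: tree_def graph_def connected_graph_def is_cycle_def intro: exI[of _ 0])
      moreover have "\<not> H x y" for x y using HX irrefl True by blast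
      ultimately show ?thesis by (auto simp: tree_extension_def degree_def)
    next
      case False
      let ?H' = "\<lambda>x y. H x y \<and> x \<noteq> l \<and> y \<noteq> l"
      have "graph (X - {l}) ?H'" using psubset.prems(1) by (auto simp: graph_def)
      moreover have "\<nexists>cs. is_cycle ?H' cs"
        using psubset.prems(2) is_cycle_mono[of ?H' _ H] by blast
      moreover have "X - {l} \<subset> X" "X - {l} \<noteq> {}" using l(1) False by auto
      ultimately obtain F' where "tree_extension (X - {l}) ?H' F'"
        using psubset.IH by blast
      then show ?thesis
        using tree_extension_reinsert_leaf[OF psubset.prems(1) l(1)] l(2) by blast
    qed
  qed
qed

lemma degree_le_max_degree: "finite V \<Longrightarrow> v \<in> V \<Longrightarrow> degree V E v \<le> max_degree V E"
  unfolding max_degree_def by (intro Max_ge) auto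

lemma max_degree_le: "finite X \<Longrightarrow> (\<And>x. x \<in> X \<Longrightarrow> degree X F x \<le> b) \<Longrightarrow> max_degree X F \<le> b"
  unfolding max_degree_def by (subst Max_le_iff) auto

lemma card_le_partition_width: "finite X \<Longrightarrow> x \<in> X \<Longrightarrow> card (P x) \<le> partition_width X P"
  unfolding partition_width_def by (intro Max_ge) auto

lemma T_partition_mono:
  "T_partition V E X F P \<Longrightarrow> (\<And>x y. F x y \<Longrightarrow> F' x y) \<Longrightarrow> T_partition V E X F' P"
  unfolding T_partition_def by blast

definition used_edges :: "('a \<Rightarrow> 'a \<Rightarrow> bool) \<Rightarrow> ('b \<Rightarrow> 'b \<Rightarrow> bool) \<Rightarrow> ('b \<Rightarrow> 'a set) \<Rightarrow> 'b \<Rightarrow> 'b \<Rightarrow> bool"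
  where "used_edges E F P x y \<longleftrightarrow> F x y \<and> (\<exists>v\<in>P x. \<exists>w\<in>P y. E v w)"

lemma graph_used_edges: "graph V E \<Longrightarrow> graph X F \<Longrightarrow> graph X (used_edges E F P)"
  unfolding graph_def used_edges_def by (simp, blast)

lemma T_partition_used_edges: "T_partition V E X F P \<Longrightarrow> T_partition V E X (used_edges E F P) P"
  unfolding T_partition_def used_edges_def by blast

lemma card_bags_meeting_le:
  assumes disjoint: "\<forall>x\<in>X. \<forall>y\<in>X. x \<noteq> y \<longrightarrow> P x \<inter> P y = {}" and "finite S"
  shows "finite {x \<in> X. P x \<inter> S \<noteq> {}}" and "card {x \<in> X. P x \<inter> S \<noteq> {}} \<le> card S"
proof -
  define pick where "pick x = (SOME v. v \<in> P x \<inter> S)" for x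
  have pick: "pick x \<in> P x \<inter> S" if "P x \<inter> S \<noteq> {}" for x
    unfolding pick_def by (rule someI_ex) (use that in blast)
  have "inj_on pick {x \<in> X. P x \<inter> S \<noteq> {}}"
  proof (rule inj_onI)
    fix x y assume "x \<in> {x \<in> X. P x \<inter> S \<noteq> {}}" "y \<in> {x \<in> X. P x \<inter> S \<noteq> {}}" "pick x = pick y"
    with pick[of x] pick[of y] disjoint show "x = y" by auto
  qed
  moreover have "pick ` {x \<in> X. P x \<inter> S \<noteq> {}} \<subseteq> S" using pick by blast
  ultimately show "finite {x \<in> X. P x \<inter> S \<noteq> {}}" "card {x \<in> X. P x \<inter> S \<noteq> {}} \<le> card S"
    using \<open>finite S\<close> by (auto intro: inj_on_finite card_inj_on_le)
qed

lemma degree_used_edges_le: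
  assumes "graph V E" "T_partition V E X F P" "x \<in> X"
  shows "degree X (used_edges E F P) x \<le> card (P x) * max_degree V E"
proof -
  have finV: "finite V" using assms(1) by (simp add: graph_def)
  have disjoint: "\<forall>x\<in>X. \<forall>y\<in>X. x \<noteq> y \<longrightarrow> P x \<inter> P y = {}" and "P x \<subseteq> V"
    using assms(2,3) by (auto simp: T_partition_def)
  then have finP: "finite (P x)" using finV finite_subset by blast
  define N where "N = (\<Union>v\<in>P x. {w \<in> V. E v w})"
  have finN: "finite N" using finV by (auto simp: N_def intro: finite_subset)
  have "{y \<in> X. used_edges E F P x y} \<subseteq> {y \<in> X. P y \<inter> N \<noteq> {}}"
    using assms(1) unfolding N_def used_edges_def graph_def by blast
  then have "degree X (used_edges E F P) x \<le> card {y \<in> X. P y \<inter> N \<noteq> {}}"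
    unfolding degree_def using card_bags_meeting_le(1)[OF disjoint finN] by (rule card_mono[rotated])
  also have "\<dots> \<le> card N" using disjoint finN by (rule card_bags_meeting_le(2))
  also have "\<dots> \<le> (\<Sum>v\<in>P x. degree V E v)" unfolding N_def degree_def using finP by (rule card_UN_le)
  also have "\<dots> \<le> (\<Sum>v\<in>P x. max_degree V E)"
    using finV \<open>P x \<subseteq> V\<close> by (intro sum_mono degree_le_max_degree) auto
  finally show ?thesis by simp
qed

definition graph_image :: "('b \<Rightarrow> 'c) \<Rightarrow> ('b \<Rightarrow> 'b \<Rightarrow> bool) \<Rightarrow> 'c \<Rightarrow> 'c \<Rightarrow> bool" where
  "graph_image f F i j \<longleftrightarrow> (\<exists>x y. F x y \<and> i = f x \<and> j = f y)"

lemma graph_graph_image: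
  assumes "inj_on f X" "graph X F"
  shows "graph (f ` X) (graph_image f F)"
  using assms unfolding graph_def graph_image_def inj_on_def by blast

lemma graph_image_inv_into:
  assumes "inj_on f X" "graph X F" "graph_image f F i j"
  shows "F (inv_into X f i) (inv_into X f j)" "i \<in> f ` X"
  using assms by (auto simp: graph_image_def graph_def)

lemma is_cycle_graph_image:
  assumes "inj_on f X" "graph X F" "is_cycle (graph_image f F) cs"
  shows "is_cycle F (map (inv_into X f) cs)"
proof -
  let ?n = "length cs"
  have edges: "graph_image f F (cs ! i) (cs ! ((i + 1) mod ?n))" if "i < ?n" for i
    using assms(3) that by (simp add: is_cycle_def)
  have "set cs \<subseteq> f ` X"
    using graph_image_inv_into(2)[OF assms(1,2) edges] by (auto simp: in_set_conv_nth)
  then have "distinct (map (inv_into X f) cs)"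
    using assms(3) inj_on_inv_into by (auto simp: is_cycle_def distinct_map)
  moreover have "(i + 1) mod ?n < ?n" if "i < ?n" for i
    using that by (intro mod_less_divisor) linarith
  ultimately show ?thesis
    using assms(3) graph_image_inv_into(1)[OF assms(1,2) edges] by (simp add: is_cycle_def)
qed

lemma T_partition_graph_image:
  assumes "inj_on f X" "T_partition V E X F P"
  shows "T_partition V E (f ` X) (graph_image f F) (\<lambda>i. P (inv_into X f i))"
  unfolding T_partition_def
proof (intro conjI ballI impI allI)
  show "(\<Union>i\<in>f ` X. P (inv_into X f i)) = V"
    using assms by (simp add: T_partition_def)
next
  fix i j assume "i \<in> f ` X" "j \<in> f ` X" "i \<noteq> j"
  then obtain x y where "x \<in> X" "y \<in> X" "x \<noteq> y" "i = f x" "j = f y" by blast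
  with assms show "P (inv_into X f i) \<inter> P (inv_into X f j) = {}"
    by (simp add: T_partition_def)
next
  fix v w i j assume "E v w" "i \<in> f ` X" "j \<in> f ` X"
    "v \<in> P (inv_into X f i)" "w \<in> P (inv_into X f j)"
  then obtain x y where "x \<in> X" "y \<in> X" "i = f x" "j = f y" "v \<in> P x" "w \<in> P y"
    using assms(1) by auto
  with assms(2) \<open>E v w\<close> show "i = j \<or> graph_image f F i j"
    unfolding T_partition_def graph_image_def by blast
qed

lemma partition_width_graph_image:
  assumes "inj_on f X"
  shows "partition_width (f ` X) (\<lambda>i. P (inv_into X f i)) = partition_width X P"
  using assms by (simp add: partition_width_def image_image)

lemma T_partition_bounded_degree_tree:
  assumes "graph V E" "graph X T" "\<nexists>cs. is_cycle T cs" "X \<noteq> {}"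
    and "T_partition V E X T P" "partition_width X P \<le> k"
  shows "\<exists>F. tree X F \<and> T_partition V E X F P \<and> max_degree X F \<le> max (k * max_degree V E) 2"
proof -
  let ?H = "used_edges E T P"
  have finX: "finite X" using assms(2) by (simp add: graph_def)
  have "graph X ?H" using assms(1,2) by (rule graph_used_edges)
  moreover have "\<nexists>cs. is_cycle ?H cs"
    using assms(3) is_cycle_mono[of ?H _ T] by (auto simp: used_edges_def)
  ultimately obtain F where F: "tree_extension X ?H F"
    using assms(4) forest_tree_extension by blast
  have "T_partition V E X F P"
    using T_partition_mono[OF T_partition_used_edges[OF assms(5)]] F
    by (simp add: tree_extension_def)
  moreover have "degree X ?H x \<le> k * max_degree V E" if "x \<in> X" for x
  proof -
    have "card (P x) \<le> k"
      using card_le_partition_width[OF finX that, of P] assms(6) by linarith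
    then show ?thesis
      using degree_used_edges_le[OF assms(1,5) that] by (meson le_trans mult_le_mono1)
  qed
  then have "degree X F x \<le> max (k * max_degree V E) 2" if "x \<in> X" for x
    using F that unfolding tree_extension_def by (meson le_trans max.mono order_refl)
  then have "max_degree X F \<le> max (k * max_degree V E) 2"
    using finX by (rule max_degree_le[rotated])
  ultimately show ?thesis using F by (auto simp: tree_extension_def)
qed

theorem mainTheorem7:
  fixes V :: "'a set" and E :: "'a \<Rightarrow> 'a \<Rightarrow> bool" and k :: nat
    and X0 :: "'b set" and F0 :: "'b \<Rightarrow> 'b \<Rightarrow> bool" and P0 :: "'b \<Rightarrow> 'a set"
  assumes "graph V E"
    and "tree X0 F0"
    and "T_partition V E X0 F0 P0"
    and "partition_width X0 P0 \<le> k"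
  shows "\<exists>(X :: nat set) F P. tree X F \<and> T_partition V E X F P \<and> partition_width X P \<le> k
           \<and> max_degree X F \<le> max (k * max_degree V E) 2"
proof -
  have tree0: "graph X0 F0" "\<nexists>cs. is_cycle F0 cs" "X0 \<noteq> {}"
    using assms(2) by (auto simp: tree_def)
  obtain f :: "'b \<Rightarrow> nat" where f: "inj_on f X0"
    using finite_imp_inj_to_nat_seg tree0(1) by (metis graph_def)
  let ?P = "\<lambda>i. P0 (inv_into X0 f i)"
  have "graph (f ` X0) (graph_image f F0)" using f tree0(1) by (rule graph_graph_image)
  moreover have "\<nexists>cs. is_cycle (graph_image f F0) cs"
    using is_cycle_graph_image[OF f tree0(1)] tree0(2) by blast
  moreover have "T_partition V E (f ` X0) (graph_image f F0) ?P"
    using f assms(3) by (rule T_partition_graph_image)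
  moreover have "partition_width (f ` X0) ?P \<le> k"
    using assms(4) partition_width_graph_image[OF f, of P0] by simp
  ultimately show ?thesis
    using T_partition_bounded_degree_tree[OF assms(1)] tree0(3) by blast
qed

end
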